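(* Let $k\ge 2$ and let $U$ be an intersecting family of polynomials over $\mathbb{F}_q$ of degree at most $k$. Let $c,\alpha,\beta\in\mathbb{F}_q$ and suppose $U$ contains more than $(q-1)q^{k-2}$ polynomials $h_i$ whose coefficient of $x^k$ equals $c$ and which satisfy $h_i(\alpha)=\beta$. Then every polynomial $f\in U$ whose coefficient of $x^k$ is not $c$ satisfies $f(\alpha)=\beta$.
   Context: A set of polynomials over $\mathbb{F}_q$ is intersecting if for any two members $f_1,f_2$ the graphs $\{(x,f_i(x)):x\in\mathbb{F}_q\}$ share at least one point. *)

theory Defs
  imports "HOL-Computational_Algebra.Polynomial"
begin

definition intersecting_family :: "('a::{finite,field}) poly set \<Rightarrow> bool" where
  "intersecting_family U \<longleftrightarrow> (\<forall>f1\<in>U. \<forall>f2\<in>U. \<exists>x. poly f1 x = poly f2 x)"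

end

theory Submission
  imports Defs
begin

text \<open>Suppose some \<open>f \<in> U\<close> misses the point \<open>(\<alpha>, \<beta>)\<close>. Every \<open>h\<close> with leading coefficient \<open>c\<close>
  through \<open>(\<alpha>, \<beta>)\<close> meets \<open>f\<close> at a point \<open>x\<^sub>h \<noteq> \<alpha>\<close>. The point \<open>x\<^sub>h\<close> together with the
  coefficients of \<open>h\<close> in degrees \<open>2, \<dots>, k - 1\<close> determines \<open>h\<close>: two such polynomials differ by
  a polynomial of degree at most one vanishing at \<open>\<alpha>\<close> and \<open>x\<^sub>h\<close>. Hence there are at most
  \<open>(q - 1) q^(k - 2)\<close> of them.\<close>

lemma poly_eq_if_coeffs_ge_2_eq:
  fixes p q :: "'a::{comm_ring_1, ring_no_zero_divisors} poly"
  assumes "\<And>i. i \<ge> 2 \<Longrightarrow> coeff p i = coeff q i"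
    and "poly p a = poly q a" and "poly p b = poly q b" and "a \<noteq> b"
  shows "p = q"
proof -
  have "degree (p - q) \<le> 1"
    by (rule degree_le) (use assms(1) in auto)
  then have "p - q = 0"
    by (intro poly_eqI_degree[of "{a, b}"]) (use assms(2-4) in auto)
  then show ?thesis by simp
qed

lemma card_polys_through_point_meeting_le:
  fixes H :: "'a::{finite,field} poly set" and f :: "'a poly"
  assumes H: "\<And>h. h \<in> H \<Longrightarrow> degree h \<le> k \<and> coeff h k = c \<and> poly h \<alpha> = \<beta>"
    and meet: "\<forall>h\<in>H. \<exists>x. poly f x = poly h x"
    and miss: "poly f \<alpha> \<noteq> \<beta>"
  shows "card H \<le> (card (UNIV :: 'a set) - 1) * card (UNIV :: 'a set) ^ (k - 2)"
proof -
  obtain x where x: "\<And>h. h \<in> H \<Longrightarrow> poly f (x h) = poly h (x h)"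
    using bchoice[OF meet] by blast
  have x_ne: "x h \<noteq> \<alpha>" if "h \<in> H" for h
    using x[OF that] H[OF that] miss by auto
  define code where "code h = (x h, map (coeff h) [2..<k])" for h
  define T :: "('a \<times> 'a list) set"
    where "T = (UNIV - {\<alpha>}) \<times> {xs. set xs \<subseteq> UNIV \<and> length xs = k - 2}"
  have "inj_on code H"
  proof (rule inj_onI)
    fix h1 h2 assume h1: "h1 \<in> H" and h2: "h2 \<in> H" and "code h1 = code h2"
    then have x_eq: "x h1 = x h2" and low: "map (coeff h1) [2..<k] = map (coeff h2) [2..<k]"
      by (simp_all add: code_def)
    show "h1 = h2"
    proof (rule poly_eq_if_coeffs_ge_2_eq)
      fix i :: nat assume "i \<ge> 2"
      consider "i < k" | "i = k" | "i > k" by linarith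
      then show "coeff h1 i = coeff h2 i"
      proof cases
        case 1
        with \<open>i \<ge> 2\<close> low show ?thesis by (simp add: map_eq_conv)
      next
        case 2
        with H[OF h1] H[OF h2] show ?thesis by simp
      next
        case 3
        with H[OF h1] H[OF h2] show ?thesis by (simp add: coeff_eq_0)
      qed
    next
      show "poly h1 \<alpha> = poly h2 \<alpha>" using H[OF h1] H[OF h2] by simp
      show "poly h1 (x h1) = poly h2 (x h1)" using x[OF h1] x[OF h2] x_eq by simp
      show "\<alpha> \<noteq> x h1" using x_ne[OF h1] by simp
    qed
  qed
  moreover have "code ` H \<subseteq> T"
    using x_ne by (auto simp: code_def T_def)
  moreover have "finite T"
    unfolding T_def using finite_lists_length_eq[of "UNIV :: 'a set" "k - 2"] by simp
  ultimately have "card H \<le> card T"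
    by (rule card_inj_on_le)
  also have "card T = (card (UNIV :: 'a set) - 1) * card (UNIV :: 'a set) ^ (k - 2)"
    unfolding T_def using card_lists_length_eq[of "UNIV :: 'a set" "k - 2"]
    by (simp add: card_cartesian_product card_Diff_singleton)
  finally show ?thesis .
qed

theorem lemma8:
  fixes U :: "('a::{finite,field}) poly set" and k :: nat and c \<alpha> \<beta> :: 'a
  assumes "k \<ge> 2"
    and "intersecting_family U"
    and "\<forall>f\<in>U. degree f \<le> k"
    and "card {h\<in>U. coeff h k = c \<and> poly h \<alpha> = \<beta>} > (card (UNIV::'a set) - 1) * card (UNIV::'a set) ^ (k - 2)"
  shows "\<forall>f\<in>U. coeff f k \<noteq> c \<longrightarrow> poly f \<alpha> = \<beta>"
proof (intro ballI impI)
  fix f assume f: "f \<in> U"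
  show "poly f \<alpha> = \<beta>"
  proof (rule ccontr)
    assume "poly f \<alpha> \<noteq> \<beta>"
    then have "card {h\<in>U. coeff h k = c \<and> poly h \<alpha> = \<beta>} \<le> (card (UNIV :: 'a set) - 1) * card (UNIV :: 'a set) ^ (k - 2)"
      by (intro card_polys_through_point_meeting_le[where f = f])
        (use assms(2,3) f in \<open>auto simp: intersecting_family_def\<close>)
    with assms(4) show False by simp
  qed
qed

end
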